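(* There exists $y\in H^N(\mathbb P^N,\Omega^{ch}_{\mathbb P^N})$ such that $d_-(y)\in H^0(\mathbb P^N,\Omega^{ch}_{\mathbb P^N})$ equals the class of the Virasoro element $L_{-2}e^0$.
   Context: Fix $N\ge1$. $L$ is the free abelian group with basis $A^1,\dots,A^N,B^1,\dots,B^N$, form $(A^i,B^j)=\delta_{ij}$, $(A^i,A^j)=(B^i,B^j)=0$; $L_A$ = span of the $A^i$. $V_L$ is the lattice vertex superalgebra of $L$ tensored with fermions (Fock modules over Heisenberg modes and odd modes $\Psi^i_j,\Phi^i_j$, $[\Psi^i_j,\Phi^k_l]_+=\delta_{ik}\delta_{j+l,0}$, generated from $e^\alpha$, $\alpha\in L$; $n$-th products $a_{(k)}b$). Let $\xi_i=A^i$ ($i\le N$), $\xi_{N+1}=-\sum_jA^j$, $\mathrm{ht}(\sum n_i\xi_i)=\sum n_i$ (unique expression, $n_i\ge0$, some $n_i=0$); $V_{L,q}$ is $V_L$ with products $a_{(k),q}b=q^{\mathrm{ht}(\alpha)+\mathrm{ht}(\alpha')-\mathrm{ht}(\alpha+\alpha')}a_{(k)}b$ ($A$-parts $\alpha,\alpha'$). Let $D=\big(\sum_{i=1}^N\Psi^i_{-1}(e^{A^i}-e^{-\sum_jA^j})\big)_{(0),q}$. Grade $V_L=\bigoplus_{n\ge0}V_L^n$ with $V_L^n$ spanned by vectors whose $A$-part has height $n$. Then $D=d_++q^Nd_-$ where $d_+$, $d_-$ are $q$-independent, $d_+(V_L^n)\subset V_L^{n+1}$, $d_-(V_L^n)\subset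 V_L^{n-N}$, and $d_+^2=d_-^2=[d_+,d_-]=0$; $d_+$ is the differential $D$ for $q=0$. By Borisov's theorem, $H_{d_+}(V_L)\cong H^*(\mathbb P^N,\Omega^{ch}_{\mathbb P^N})$, where $\Omega^{ch}$ is the chiral de Rham complex (a sheaf of conformal vertex superalgebras whose conformal weight zero part is the sheaf of differential forms), the height grading corresponding to cohomological degree. Hence $d_-$ induces a map $H^n(\mathbb P^N,\Omega^{ch}_{\mathbb P^N})\to H^{n-N}(\mathbb P^N,\Omega^{ch}_{\mathbb P^N})$. The Virasoro element is $L_{-2}e^0=\sum_i(B^i_{-1}A^i_{-1}+\Phi^i_{-1}\Psi^i_{-1})e^0\in V_L$, which is a $d_+$-cocycle representing the Virasoro element of $H^0(\mathbb P^N,\Omega^{ch}_{\mathbb P^N})$. *)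

theory Defs
  imports Complex_Main "HOL-Library.Multiset"
begin

text \<open>
Concrete model of the lattice vertex superalgebra V_L tensored with fermions.
Indices i of A^i, B^i, Psi^i, Phi^i are shifted to 0..N-1.

Basis vectors of V_L:  ((a,b), M, F)  meaning
   (ordered product of the fermionic creation modes in F, increasing w.r.t. vl_fless)
   * (commuting bosonic creation modes in the multiset M) * e^gamma,
   gamma = sum_i a i A^i + b i B^i.
Bosonic creation modes:  BA i m = A^i_{-(m+1)},  BB i m = B^i_{-(m+1)}.
Fermionic creation modes: FPsi i m = Psi^i_{-(m+1)},  FPhi i m = Phi^i_{-m}.
(Vacuum: Psi^i_j kills it for j >= 0, Phi^i_j for j >= 1.)
\<close>

datatype vl_bos = BA nat nat | BB nat nat
datatype vl_ferm = FPsi nat nat | FPhi nat nat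

type_synonym vl_lat = "(nat \<Rightarrow> int) \<times> (nat \<Rightarrow> int)"
type_synonym vl_basis = "vl_lat \<times> vl_bos multiset \<times> vl_ferm set"
type_synonym vl_vec = "vl_basis \<Rightarrow> complex"

fun vl_bidx :: "vl_bos \<Rightarrow> nat" where
  "vl_bidx (BA i m) = i" | "vl_bidx (BB i m) = i"
fun vl_bmode :: "vl_bos \<Rightarrow> nat" where
  "vl_bmode (BA i m) = m" | "vl_bmode (BB i m) = m"
fun vl_fidx :: "vl_ferm \<Rightarrow> nat" where
  "vl_fidx (FPsi i m) = i" | "vl_fidx (FPhi i m) = i"
fun vl_fmode :: "vl_ferm \<Rightarrow> nat" where
  "vl_fmode (FPsi i m) = m" | "vl_fmode (FPhi i m) = m"
fun vl_fkind :: "vl_ferm \<Rightarrow> nat" where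
  "vl_fkind (FPhi i m) = 0" | "vl_fkind (FPsi i m) = 1"

definition vl_fless :: "vl_ferm \<Rightarrow> vl_ferm \<Rightarrow> bool" where
  "vl_fless x y \<longleftrightarrow> vl_fkind x < vl_fkind y \<or>
     (vl_fkind x = vl_fkind y \<and> (vl_fidx x < vl_fidx y \<or>
        (vl_fidx x = vl_fidx y \<and> vl_fmode x < vl_fmode y)))"

definition vl_valid :: "nat \<Rightarrow> vl_basis \<Rightarrow> bool" where
  "vl_valid N x \<longleftrightarrow>
     (\<forall>i\<ge>N. fst (fst x) i = 0 \<and> snd (fst x) i = 0) \<and>
     (\<forall>l\<in>#fst (snd x). vl_bidx l < N) \<and>
     finite (snd (snd x)) \<and> (\<forall>f\<in>snd (snd x). vl_fidx f < N)"

definition VL :: "nat \<Rightarrow> vl_vec set" where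
  "VL N = {v. finite {x. v x \<noteq> 0} \<and> (\<forall>x. v x \<noteq> 0 \<longrightarrow> vl_valid N x)}"

text \<open>Height of an element sum_i a i A^i of L_A, exactly as in the paper:
  xi_{i+1} = A^{i+1} (i < N), xi_{N+1} = - sum_j A^j (coefficient n N),
  unique expression with n_i >= 0 and some n_i = 0.\<close>
definition vl_ht :: "nat \<Rightarrow> (nat \<Rightarrow> int) \<Rightarrow> nat" where
  "vl_ht N a = (THE h. \<exists>n::nat \<Rightarrow> nat. (\<exists>i\<le>N. n i = 0) \<and>
       (\<forall>i<N. a i = int (n i) - int (n N)) \<and> h = (\<Sum>i\<le>N. n i))"

definition VLgr :: "nat \<Rightarrow> int \<Rightarrow> vl_vec set" where
  "VLgr N n = {v \<in> VL N. \<forall>x. v x \<noteq> 0 \<longrightarrow> int (vl_ht N (fst (fst x))) = n}"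

definition vl_single :: "vl_basis \<Rightarrow> vl_vec" where
  "vl_single b = (\<lambda>y. if y = b then 1 else 0)"

definition vl_lin :: "(vl_basis \<Rightarrow> vl_vec) \<Rightarrow> vl_vec \<Rightarrow> vl_vec" where
  "vl_lin f v = (\<lambda>y. \<Sum>x\<in>{x. v x \<noteq> 0}. v x * f x y)"

definition vl_psi :: "nat \<Rightarrow> int \<Rightarrow> vl_basis \<Rightarrow> vl_vec" where
  "vl_psi i J x = (case x of (g, M, F) \<Rightarrow>
     if J < 0 then
       (let f = FPsi i (nat (- J - 1)) in
        if f \<in> F then (\<lambda>_. 0)
        else (\<lambda>y. (-1) ^ card {z\<in>F. vl_fless z f} * vl_single (g, M, insert f F) y))
     else
       (let f = FPhi i (nat J) in
        if f \<in> F then (\<lambda>y. (-1) ^ card {z\<in>F. vl_fless z f} * vl_single (g, M, F - {f}) y)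
        else (\<lambda>_. 0)))"

definition vl_wdeg :: "vl_bos multiset \<Rightarrow> nat" where
  "vl_wdeg M = sum_mset (image_mset (\<lambda>l. vl_bmode l + 1) M)"

text \<open>Coefficient of the monomial M2 in E^-(beta,z) = exp(sum_{n>0} beta_{-n} z^n / n),
  beta = sum_j c j A^j.\<close>
definition vl_coefE :: "(nat \<Rightarrow> int) \<Rightarrow> vl_bos multiset \<Rightarrow> complex" where
  "vl_coefE c M2 = (\<Prod>l\<in>set_mset M2. (case l of
      BA j m \<Rightarrow> (of_int (c j) / of_nat (m + 1)) ^ count M2 l / fact (count M2 l)
    | BB j m \<Rightarrow> 0))"

text \<open>E^+(beta,z) = exp(- sum_{n>0} beta_n z^{-n} / n) acts on polynomials by
  B^j_{-n} |-> B^j_{-n} - c j z^{-n}; coefficient of removing the sub-multiset M1 of M.\<close>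
definition vl_coefT :: "(nat \<Rightarrow> int) \<Rightarrow> vl_bos multiset \<Rightarrow> vl_bos multiset \<Rightarrow> complex" where
  "vl_coefT c M M1 = (if M1 \<subseteq># M then (\<Prod>l\<in>set_mset M1. (case l of
      BB j m \<Rightarrow> of_nat (count M l choose count M1 l) * (- of_int (c j)) ^ count M1 l
    | BA j m \<Rightarrow> 0)) else 0)"

text \<open>One term of the residue of Psi^i(z) Y(e^beta, z) on a basis vector
  (lattice cocycle chosen trivial on L_A x L, a valid choice for this even lattice).\<close>
definition vl_ztm :: "nat \<Rightarrow> (nat \<Rightarrow> int) \<Rightarrow> nat \<Rightarrow> vl_basis \<Rightarrow>
                       vl_bos multiset \<times> vl_bos multiset \<Rightarrow> vl_vec" where
  "vl_ztm N c i x p = (case x of ((a, b), M, F) \<Rightarrow> case p of (M2, M1) \<Rightarrow>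
     (let k = (\<Sum>j<N. c j * b j);
          J = k + int (vl_wdeg M2) - int (vl_wdeg M1);
          x' = ((\<lambda>j. a j + c j, b), M - M1 + M2, F)
      in (\<lambda>y. vl_coefE c M2 * vl_coefT c M M1 * vl_psi i J x' y)))"

text \<open>(Psi^i_{-1} e^beta)_{(0)} on a basis vector: the z^{-1} coefficient
  (the sum is finite; it is taken over the support of the terms).\<close>
definition vl_zero_mode :: "nat \<Rightarrow> (nat \<Rightarrow> int) \<Rightarrow> nat \<Rightarrow> vl_basis \<Rightarrow> vl_vec" where
  "vl_zero_mode N c i x =
     (\<lambda>y. \<Sum>p\<in>{p. vl_ztm N c i x p \<noteq> (\<lambda>_. 0)}. vl_ztm N c i x p y)"

definition vl_cA :: "nat \<Rightarrow> nat \<Rightarrow> int" where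
  "vl_cA i = (\<lambda>j. if j = i then 1 else 0)"
definition vl_cNeg :: "nat \<Rightarrow> nat \<Rightarrow> int" where
  "vl_cNeg N = (\<lambda>j. if j < N then -1 else 0)"

definition vl_qexp :: "nat \<Rightarrow> (nat \<Rightarrow> int) \<Rightarrow> (nat \<Rightarrow> int) \<Rightarrow> nat" where
  "vl_qexp N a a' = vl_ht N a + vl_ht N a' - vl_ht N (\<lambda>j. a j + a' j)"

definition vl_Dq_basis :: "nat \<Rightarrow> complex \<Rightarrow> vl_basis \<Rightarrow> vl_vec" where
  "vl_Dq_basis N q x = (\<lambda>y. \<Sum>i<N.
       q ^ vl_qexp N (vl_cA i) (fst (fst x)) * vl_zero_mode N (vl_cA i) i x y
     - q ^ vl_qexp N (vl_cNeg N) (fst (fst x)) * vl_zero_mode N (vl_cNeg N) i x y)"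

definition vl_Dq :: "nat \<Rightarrow> complex \<Rightarrow> vl_vec \<Rightarrow> vl_vec" where
  "vl_Dq N q v = vl_lin (vl_Dq_basis N q) v"

text \<open>D = d_+ + q^N d_-: hence d_+ = D at q = 0 (0^0 = 1) and d_- = D at q = 1 minus d_+.\<close>
definition vl_dplus :: "nat \<Rightarrow> vl_vec \<Rightarrow> vl_vec" where
  "vl_dplus N v = vl_Dq N 0 v"
definition vl_dminus :: "nat \<Rightarrow> vl_vec \<Rightarrow> vl_vec" where
  "vl_dminus N v = (\<lambda>y. vl_Dq N 1 v y - vl_Dq N 0 v y)"

definition vl_vir :: "nat \<Rightarrow> vl_vec" where
  "vl_vir N = (\<lambda>y. \<Sum>i<N.
       vl_single ((\<lambda>_. 0, \<lambda>_. 0), {#BB i 0, BA i 0#}, {}) y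
     + vl_single ((\<lambda>_. 0, \<lambda>_. 0), {#}, {FPhi i 1, FPsi i 0}) y)"

end

theory Submission
  imports Defs
begin

text \<open>
The class is represented by an explicit cocycle y of V_L^N supported on the lattice point
A^1 + ... + A^N: a combination, with coefficients in Q[1/(N+1)], of seven families of Fock
monomials indexed by pairs (k, j). At this lattice point the terms of D coming from e^{A^i}
carry q^0 and those coming from e^{-sum_j A^j} a positive power of q, so d_+ y and d_- y are
the zero modes of sum_i Psi^i_{-1} e^{A^i} and of - sum_i Psi^i_{-1} e^{-sum_j A^j} applied to y.
Since y contains no Phi^i_{-m} with m \<ge> 2 and at most one B-mode, only the terms of weight at
most 2 of the vertex operators E^-(beta, z) and at most 1 of E^+(beta, z) contribute, and both
zero modes become finite double sums over (k, j). After moving part of the (k, j) summand to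
(j, k), every summand of d_+ y vanishes and every summand of d_- y vanishes off the diagonal,
while the diagonal ones are B^k_{-1} A^k_{-1} e^0 + Phi^k_{-1} Psi^k_{-1} e^0. As V_L^{-1} = 0,
this gives d_- y = L_{-2} e^0 on the nose.
\<close>

section \<open>Zero modes of Psi^i_{-1} e^beta\<close>

lemma vl_wdeg_empty [simp]: "vl_wdeg {#} = 0"
  by (simp add: vl_wdeg_def)

lemma vl_wdeg_add_mset [simp]: "vl_wdeg (add_mset l M) = vl_bmode l + 1 + vl_wdeg M"
  by (simp add: vl_wdeg_def)

lemma vl_wdeg_eq_0D: "vl_wdeg M = 0 \<Longrightarrow> M = {#}"
  by (cases M) auto

definition low_A_monomials :: "nat \<Rightarrow> vl_bos multiset set" where
  "low_A_monomials N = {{#}} \<union> (\<lambda>n. {#BA n 0#}) ` {..<N} \<union> (\<lambda>n. {#BA n 1#}) ` {..<N}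
     \<union> (\<lambda>(n, n'). {#BA n 0, BA n' 0#}) ` ({..<N} \<times> {..<N})"

lemma finite_low_A_monomials: "finite (low_A_monomials N)"
  by (simp add: low_A_monomials_def)

lemma low_A_monomialsI:
  assumes A_modes: "\<forall>l\<in>#M. \<exists>n m. l = BA n m \<and> n < N" and wdeg: "vl_wdeg M \<le> 2"
  shows "M \<in> low_A_monomials N"
proof (cases M)
  case empty
  then show ?thesis by (simp add: low_A_monomials_def)
next
  case M: (add l1 M1)
  then obtain n1 m1 where l1: "l1 = BA n1 m1" "n1 < N" using A_modes by auto
  show ?thesis
  proof (cases M1)
    case empty
    then have "m1 = 0 \<or> m1 = 1" using wdeg M l1 by auto
    then show ?thesis using M empty l1 by (auto simp: low_A_monomials_def)
  next
    case M1: (add l2 M2)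
    obtain n2 m2 where l2: "l2 = BA n2 m2" "n2 < N" using A_modes M M1 by auto
    have "m1 = 0" "m2 = 0" "vl_wdeg M2 = 0" using wdeg M M1 l1 l2 by simp_all
    then have "M = (\<lambda>(n, n'). {#BA n 0, BA n' 0#}) (n1, n2)"
      using M M1 l1 l2 vl_wdeg_eq_0D by simp
    then show ?thesis using l1 l2 unfolding low_A_monomials_def by blast
  qed
qed

lemma vl_coefE_empty [simp]: "vl_coefE c {#} = 1"
  by (simp add: vl_coefE_def)

lemma vl_coefE_single: "vl_coefE c {#BA n 0#} = of_int (c n)"
  by (simp add: vl_coefE_def)

lemma vl_coefE_pair:
  "vl_coefE c {#BA n 0, BA n' 0#} =
     (if n = n' then of_int (c n) ^ 2 / 2 else of_int (c n) * of_int (c n'))"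
proof (cases "n = n'")
  case True
  then show ?thesis by (simp add: vl_coefE_def numeral_2_eq_2)
next
  case False
  then have "set_mset {#BA n 0, BA n' 0#} = {BA n 0, BA n' 0}" by auto
  then show ?thesis using False by (simp add: vl_coefE_def)
qed

lemma A_pair_eq_iff:
  "{#BA x 0, BA y 0#} = {#BA a 0, BA b 0#} \<longleftrightarrow> x = a \<and> y = b \<or> x = b \<and> y = a"
  by (auto simp: add_eq_conv_ex)

text \<open>Distinct modes n \<noteq> n' occur twice in the ordered double sum, hence the factor 1/2.\<close>
lemma sum_A_pairs_coefE:
  fixes G :: "vl_bos multiset \<Rightarrow> complex"
  shows "(\<Sum>M\<in>(\<lambda>(n, n'). {#BA n 0, BA n' 0#}) ` ({..<N} \<times> {..<N}). vl_coefE c M * G M)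
       = (\<Sum>n<N. \<Sum>n'<N. of_int (c n) * of_int (c n') / 2 * G {#BA n 0, BA n' 0#})"
proof -
  let ?f = "\<lambda>(n, n'). {#BA n 0, BA n' 0#}"
  let ?X = "{..<N} \<times> {..<N}"
  let ?h = "\<lambda>(n, n'). of_int (c n) * of_int (c n') / 2 * G {#BA n 0, BA n' 0#} :: complex"
  have "(\<Sum>n<N. \<Sum>n'<N. of_int (c n) * of_int (c n') / 2 * G {#BA n 0, BA n' 0#})
      = (\<Sum>p\<in>?X. ?h p)"
    by (simp add: sum.cartesian_product)
  also have "\<dots> = (\<Sum>M\<in>?f ` ?X. \<Sum>p\<in>{p\<in>?X. ?f p = M}. ?h p)"
    by (rule sum.image_gen) simp
  also have "\<dots> = (\<Sum>M\<in>?f ` ?X. vl_coefE c M * G M)"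
  proof (rule sum.cong[OF refl])
    fix M assume "M \<in> ?f ` ?X"
    then obtain a b where ab: "a < N" "b < N" "M = {#BA a 0, BA b 0#}" by auto
    show "(\<Sum>p\<in>{p\<in>?X. ?f p = M}. ?h p) = vl_coefE c M * G M"
    proof (cases "a = b")
      case True
      then have "{p\<in>?X. ?f p = M} = {(a, a)}" using ab by (auto simp: A_pair_eq_iff)
      then show ?thesis using True ab by (simp add: vl_coefE_pair power2_eq_square)
    next
      case False
      then have "{p\<in>?X. ?f p = M} = {(a, b), (b, a)}" using ab by (auto simp: A_pair_eq_iff)
      then show ?thesis
        using False ab by (simp add: vl_coefE_pair field_simps add_mset_commute)
    qed
  qed
  finally show ?thesis by simp
qed

lemma sum_low_A_monomials_coefE:
  fixes G :: "vl_bos multiset \<Rightarrow> complex"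
  shows "(\<Sum>M\<in>low_A_monomials N. vl_coefE c M * G M) =
       G {#} + (\<Sum>n<N. of_int (c n) * G {#BA n 0#})
     + (\<Sum>n<N. of_int (c n) / 2 * G {#BA n 1#})
     + (\<Sum>n<N. \<Sum>n'<N. of_int (c n) * of_int (c n') / 2 * G {#BA n 0, BA n' 0#})"
proof -
  let ?S1 = "{{#}} :: vl_bos multiset set"
  let ?S2 = "(\<lambda>n. {#BA n 0#}) ` {..<N}"
  let ?S3 = "(\<lambda>n. {#BA n 1#}) ` {..<N}"
  let ?S4 = "(\<lambda>(n, n'). {#BA n 0, BA n' 0#}) ` ({..<N} \<times> {..<N})"
  let ?g = "\<lambda>M. vl_coefE c M * G M"
  have "sum ?g (low_A_monomials N) = sum ?g (?S1 \<union> ?S2 \<union> ?S3) + sum ?g ?S4"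
    unfolding low_A_monomials_def by (rule sum.union_disjoint) auto
  also have "sum ?g (?S1 \<union> ?S2 \<union> ?S3) = sum ?g (?S1 \<union> ?S2) + sum ?g ?S3"
    by (rule sum.union_disjoint) auto
  also have "sum ?g (?S1 \<union> ?S2) = sum ?g ?S1 + sum ?g ?S2"
    by (rule sum.union_disjoint) auto
  also have "sum ?g ?S2 = (\<Sum>n<N. of_int (c n) * G {#BA n 0#})"
    by (subst sum.reindex) (auto simp: inj_on_def vl_coefE_single)
  also have "sum ?g ?S3 = (\<Sum>n<N. of_int (c n) / 2 * G {#BA n 1#})"
    by (subst sum.reindex) (auto simp: inj_on_def vl_coefE_def)
  also have "sum ?g ?S4 = (\<Sum>n<N. \<Sum>n'<N. of_int (c n) * of_int (c n') / 2 * G {#BA n 0, BA n' 0#})"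
    by (rule sum_A_pairs_coefE)
  finally show ?thesis by simp
qed

lemma vl_zero_mode_eq_sum_superset:
  assumes "finite S" "\<And>p. vl_ztm N c i x p \<noteq> (\<lambda>_. 0) \<Longrightarrow> p \<in> S"
  shows "vl_zero_mode N c i x y = (\<Sum>p\<in>S. vl_ztm N c i x p y)"
  unfolding vl_zero_mode_def by (rule sum.mono_neutral_left) (use assms in auto)

lemma vl_ztm_orthogonal:
  assumes "(\<Sum>j<N. c j * b j) = 0"
  shows "vl_ztm N c i ((a, b), M, F) (M2, M1) = (\<lambda>y. vl_coefE c M2 * vl_coefT c M M1 *
     vl_psi i (int (vl_wdeg M2) - int (vl_wdeg M1)) ((\<lambda>j. a j + c j, b), M - M1 + M2, F) y)"
  using assms by (simp add: vl_ztm_def Let_def)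

lemma vl_coefE_nonzero_imp_A_modes:
  assumes "vl_coefE c M2 \<noteq> 0" "l \<in># M2"
  shows "\<exists>n m. l = BA n m \<and> c n \<noteq> 0"
proof -
  have "(case l of
      BA j m \<Rightarrow> (of_int (c j) / of_nat (m + 1)) ^ count M2 l / fact (count M2 l)
    | BB j m \<Rightarrow> 0) \<noteq> (0::complex)"
    using assms prod_zero_iff[OF finite_set_mset] unfolding vl_coefE_def by blast
  moreover have "count M2 l \<noteq> 0" using assms(2) by simp
  ultimately show ?thesis by (cases l) auto
qed

lemma vl_coefT_nonzero_imp_B_modes:
  assumes "vl_coefT c M M1 \<noteq> 0"
  shows "M1 \<subseteq># M" "l \<in># M1 \<Longrightarrow> \<exists>j m. l = BB j m \<and> c j \<noteq> 0"
proof -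
  show sub: "M1 \<subseteq># M" using assms unfolding vl_coefT_def by (auto split: if_splits)
  assume l: "l \<in># M1"
  have "(case l of
      BB j m \<Rightarrow> of_nat (count M l choose count M1 l) * (- of_int (c j)) ^ count M1 l
    | BA j m \<Rightarrow> 0) \<noteq> (0::complex)"
    using assms sub l prod_zero_iff[OF finite_set_mset] unfolding vl_coefT_def by auto
  moreover have "count M1 l \<noteq> 0" using l by simp
  ultimately show "\<exists>j m. l = BB j m \<and> c j \<noteq> 0" by (cases l) auto
qed

lemma vl_psi_nonzero_imp:
  assumes "vl_psi i J x \<noteq> (\<lambda>_. 0)"
  shows "J < 0 \<or> FPhi i (nat J) \<in> snd (snd x)"
  using assms unfolding vl_psi_def by (auto simp: Let_def split: prod.splits if_splits)

text \<open>Without Phi^i_{-m}, m \<ge> 2, in F the final Psi^i-mode must have order at most 1, which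
  bounds the weight of the E^- monomial by 2 once the E^+ part has weight at most 1.\<close>
lemma vl_ztm_support:
  assumes orth: "(\<Sum>j<N. c j * b j) = 0"
    and supp_c: "\<forall>n. c n \<noteq> 0 \<longrightarrow> n < N"
    and no_Phi: "\<forall>m\<ge>2. FPhi i m \<notin> F"
    and B_part: "\<And>M1. M1 \<subseteq># M \<Longrightarrow> \<forall>l\<in>#M1. \<exists>j m. l = BB j m \<and> c j \<noteq> 0 \<Longrightarrow> M1 \<in> Ms"
    and B_wdeg: "\<forall>M1\<in>Ms. vl_wdeg M1 \<le> 1"
    and nonzero: "vl_ztm N c i ((a, b), M, F) (M2, M1) \<noteq> (\<lambda>_. 0)"
  shows "M2 \<in> low_A_monomials N \<and> M1 \<in> Ms"
proof -
  let ?J = "int (vl_wdeg M2) - int (vl_wdeg M1)"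
  let ?x = "((\<lambda>j. a j + c j, b), M - M1 + M2, F)"
  have "vl_coefE c M2 \<noteq> 0" "vl_coefT c M M1 \<noteq> 0" "vl_psi i ?J ?x \<noteq> (\<lambda>_. 0)"
    using nonzero unfolding vl_ztm_orthogonal[OF orth] by auto
  note E = this(1) and T = this(2) and psi = this(3)
  have M1: "M1 \<in> Ms" using vl_coefT_nonzero_imp_B_modes[OF T] B_part by blast
  have "?J < 0 \<or> FPhi i (nat ?J) \<in> F" using vl_psi_nonzero_imp[OF psi] by simp
  then have "?J < 2"
  proof (elim disjE)
    assume "FPhi i (nat ?J) \<in> F"
    then have "\<not> 2 \<le> nat ?J" using no_Phi by blast
    then show ?thesis by linarith
  qed simp
  then have "vl_wdeg M2 \<le> 2" using B_wdeg M1 by fastforce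
  moreover have "\<forall>l\<in>#M2. \<exists>n m. l = BA n m \<and> n < N"
    using vl_coefE_nonzero_imp_A_modes[OF E] supp_c by blast
  ultimately show ?thesis using low_A_monomialsI M1 by blast
qed

lemma vl_zero_mode_expansion:
  assumes orth: "(\<Sum>j<N. c j * b j) = 0"
    and supp_c: "\<forall>n. c n \<noteq> 0 \<longrightarrow> n < N"
    and no_Phi: "\<forall>m\<ge>2. FPhi i m \<notin> F"
    and B_part: "\<And>M1. M1 \<subseteq># M \<Longrightarrow> \<forall>l\<in>#M1. \<exists>j m. l = BB j m \<and> c j \<noteq> 0 \<Longrightarrow> M1 \<in> Ms"
    and B_wdeg: "\<forall>M1\<in>Ms. vl_wdeg M1 \<le> 1"
    and fin: "finite Ms"
  shows "vl_zero_mode N c i ((a, b), M, F) y = (\<Sum>M1\<in>Ms. vl_coefT c M M1 * (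
      vl_psi i (- int (vl_wdeg M1)) ((\<lambda>j. a j + c j, b), M - M1, F) y
    + (\<Sum>n<N. of_int (c n) *
         vl_psi i (1 - int (vl_wdeg M1)) ((\<lambda>j. a j + c j, b), add_mset (BA n 0) (M - M1), F) y)
    + (\<Sum>n<N. of_int (c n) / 2 *
         vl_psi i (2 - int (vl_wdeg M1)) ((\<lambda>j. a j + c j, b), add_mset (BA n 1) (M - M1), F) y)
    + (\<Sum>n<N. \<Sum>n'<N. of_int (c n) * of_int (c n') / 2 *
         vl_psi i (2 - int (vl_wdeg M1))
           ((\<lambda>j. a j + c j, b), add_mset (BA n 0) (add_mset (BA n' 0) (M - M1)), F) y)))"
proof -
  let ?G = "\<lambda>M1 M2. vl_coefT c M M1 *
     vl_psi i (int (vl_wdeg M2) - int (vl_wdeg M1)) ((\<lambda>j. a j + c j, b), M - M1 + M2, F) y"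
  have "vl_zero_mode N c i ((a, b), M, F) y =
      (\<Sum>p\<in>low_A_monomials N \<times> Ms. vl_ztm N c i ((a, b), M, F) p y)"
    using finite_low_A_monomials fin vl_ztm_support[OF orth supp_c no_Phi B_part B_wdeg]
    by (intro vl_zero_mode_eq_sum_superset) auto
  also have "\<dots> = (\<Sum>M2\<in>low_A_monomials N. \<Sum>M1\<in>Ms. vl_coefE c M2 * ?G M1 M2)"
    by (simp add: sum.cartesian_product, rule sum.cong)
      (auto simp: vl_ztm_orthogonal[OF orth] mult.assoc)
  also have "\<dots> = (\<Sum>M1\<in>Ms. \<Sum>M2\<in>low_A_monomials N. vl_coefE c M2 * ?G M1 M2)"
    by (rule sum.swap)
  finally show ?thesis
    by (simp add: sum_low_A_monomials_coefE sum_distrib_left algebra_simps)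
qed

lemma vl_psi_absent:
  "0 \<le> J \<Longrightarrow> FPhi i (nat J) \<notin> F \<Longrightarrow> vl_psi i J (g, M, F) = (\<lambda>_. 0)"
  unfolding vl_psi_def by (auto simp: Let_def)

lemma vl_psi_annihilate:
  "vl_psi i (int m) (g, M, F) = (if FPhi i m \<in> F then
     (\<lambda>y. (-1) ^ card {z\<in>F. vl_fless z (FPhi i m)} * vl_single (g, M, F - {FPhi i m}) y)
   else (\<lambda>_. 0))"
  unfolding vl_psi_def by (auto simp: Let_def)

lemma vl_psi_create:
  "vl_psi i (-1) (g, M, F) = (if FPsi i 0 \<in> F then (\<lambda>_. 0) else
     (\<lambda>y. (-1) ^ card {z\<in>F. vl_fless z (FPsi i 0)} * vl_single (g, M, insert (FPsi i 0) F) y))"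
  unfolding vl_psi_def by (auto simp: Let_def)

lemma vl_zero_mode_no_B:
  assumes orth: "(\<Sum>j<N. c j * b j) = 0"
    and supp_c: "\<forall>n. c n \<noteq> 0 \<longrightarrow> n < N"
    and no_Phi: "\<forall>m\<ge>2. FPhi i m \<notin> F"
    and no_B: "\<forall>l\<in>#M. \<forall>j m. l \<noteq> BB j m"
  shows "vl_zero_mode N c i ((a, b), M, F) y = vl_psi i 0 ((\<lambda>j. a j + c j, b), M, F) y
     + (\<Sum>n<N. of_int (c n) * vl_psi i 1 ((\<lambda>j. a j + c j, b), add_mset (BA n 0) M, F) y)"
proof -
  have B_part: "M1 \<in> {{#}}"
    if "M1 \<subseteq># M" "\<forall>l\<in>#M1. \<exists>j m. l = BB j m \<and> c j \<noteq> 0" for M1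
    using that no_B by (metis insertI1 mset_subset_eqD multiset_nonemptyE)
  have "vl_psi i 2 (g, M', F) = (\<lambda>_. 0)" for g M'
    by (rule vl_psi_absent) (use no_Phi in auto)
  then show ?thesis
    by (subst vl_zero_mode_expansion[OF orth supp_c no_Phi B_part]) (simp_all add: vl_coefT_def)
qed

lemma vl_zero_mode_one_B:
  assumes orth: "(\<Sum>j<N. c j * b j) = 0"
    and supp_c: "\<forall>n. c n \<noteq> 0 \<longrightarrow> n < N"
    and no_Phi: "\<forall>m\<ge>2. FPhi i m \<notin> F"
    and no_B: "\<forall>l\<in>#M. \<forall>j m. l \<noteq> BB j m"
  shows "vl_zero_mode N c i ((a, b), add_mset (BB j 0) M, F) y =
       vl_psi i 0 ((\<lambda>j. a j + c j, b), add_mset (BB j 0) M, F) y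
     + (\<Sum>n<N. of_int (c n) *
          vl_psi i 1 ((\<lambda>j. a j + c j, b), add_mset (BA n 0) (add_mset (BB j 0) M), F) y)
     - of_int (c j) * (vl_psi i (-1) ((\<lambda>j. a j + c j, b), M, F) y
       + (\<Sum>n<N. of_int (c n) * vl_psi i 0 ((\<lambda>j. a j + c j, b), add_mset (BA n 0) M, F) y)
       + (\<Sum>n<N. of_int (c n) / 2 * vl_psi i 1 ((\<lambda>j. a j + c j, b), add_mset (BA n 1) M, F) y)
       + (\<Sum>n<N. \<Sum>n'<N. of_int (c n) * of_int (c n') / 2 *
             vl_psi i 1 ((\<lambda>j. a j + c j, b), add_mset (BA n 0) (add_mset (BA n' 0) M), F) y))"
proof -
  have B_part: "M1 \<in> {{#}, {#BB j 0#}}"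
    if sub: "M1 \<subseteq># add_mset (BB j 0) M" and B: "\<forall>l\<in>#M1. \<exists>j m. l = BB j m \<and> c j \<noteq> 0"
    for M1
  proof -
    have "M1 \<subseteq># {#BB j 0#}"
    proof (rule mset_subset_eqI)
      fix l
      show "count M1 l \<le> count {#BB j 0#} l"
      proof (cases "l \<in># M1")
        case True
        then have "count M l = 0" using B no_B by (auto simp: count_eq_zero_iff)
        then show ?thesis using mset_subset_eq_count[OF sub, of l] by (auto split: if_splits)
      qed (simp add: not_in_iff)
    qed
    then show ?thesis by (cases "M1 = {#}") (auto dest: nonempty_subseteq_mset_eq_single)
  qed
  have "vl_psi i 2 (g, M', F) = (\<lambda>_. 0)" for g M'
    by (rule vl_psi_absent) (use no_Phi in auto)
  moreover have "vl_coefT c (add_mset (BB j 0) M) {#BB j 0#} = - of_int (c j)"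
    using no_B by (auto simp: vl_coefT_def count_eq_zero_iff)
  ultimately show ?thesis
    by (subst vl_zero_mode_expansion[OF orth supp_c no_Phi B_part])
      (simp_all add: vl_coefT_def[of _ _ "{#}"] algebra_simps)
qed

section \<open>Heights\<close>

text \<open>Heights are computed by exhibiting the representation sum_i n_i xi_i, which is unique
  because the n_i are determined up to a common shift and one of them vanishes.\<close>
lemma vl_ht_eqI:
  fixes n :: "nat \<Rightarrow> nat"
  assumes zero: "\<exists>i\<le>N. n i = 0" and coeffs: "\<forall>i<N. a i = int (n i) - int (n N)"
  shows "vl_ht N a = (\<Sum>i\<le>N. n i)"
  unfolding vl_ht_def
proof (rule the_equality)
  fix h assume "\<exists>n'::nat \<Rightarrow> nat. (\<exists>i\<le>N. n' i = 0) \<and> (\<forall>i<N. a i = int (n' i) - int (n' N))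
    \<and> h = (\<Sum>i\<le>N. n' i)"
  then obtain n' where zero': "\<exists>i\<le>N. n' i = 0"
    and coeffs': "\<forall>i<N. a i = int (n' i) - int (n' N)" and h: "h = (\<Sum>i\<le>N. n' i)"
    by blast
  define d where "d = int (n' N) - int (n N)"
  have shift: "int (n' i) - int (n i) = d" if "i \<le> N" for i
    using that coeffs coeffs' unfolding d_def by (cases "i < N") force+
  obtain i0 i1 where "i0 \<le> N" "n i0 = 0" "i1 \<le> N" "n' i1 = 0" using zero zero' by blast
  then have "d = 0" using shift[of i0] shift[of i1] by simp
  then have "n' i = n i" if "i \<le> N" for i using shift[OF that] by simp
  then show "h = (\<Sum>i\<le>N. n i)" unfolding h by (intro sum.cong) auto
qed (use zero coeffs in blast)

definition vl_cSum :: "nat \<Rightarrow> nat \<Rightarrow> int" where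
  "vl_cSum N = (\<lambda>j. if j < N then 1 else 0)"

lemma vl_ht_cSum: "vl_ht N (vl_cSum N) = N"
  by (subst vl_ht_eqI[where n = "\<lambda>i. if i < N then 1 else 0"])
    (auto simp: vl_cSum_def atMost_Suc_eq_insert_0 lessThan_Suc_atMost[symmetric])

lemma vl_ht_cA: "i < N \<Longrightarrow> vl_ht N (vl_cA i) = 1"
  by (subst vl_ht_eqI[where n = "\<lambda>j. if j = i then 1 else 0"]) (auto simp: vl_cA_def)

lemma vl_ht_cA_plus_cSum: "i < N \<Longrightarrow> vl_ht N (\<lambda>j. vl_cA i j + vl_cSum N j) = N + 1"
proof -
  assume i: "i < N"
  have "(\<Sum>j\<le>N. if j = i then 2 else if j < N then 1 else 0 :: nat)
      = (\<Sum>j\<le>N. (if j < N then 1 else 0) + (if j = i then 1 else 0))"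
    by (rule sum.cong) (use i in auto)
  also have "\<dots> = N + 1"
    using i by (simp add: sum.distrib atMost_Suc_eq_insert_0 lessThan_Suc_atMost[symmetric])
  finally show ?thesis
    by (subst vl_ht_eqI[where n = "\<lambda>j. if j = i then 2 else if j < N then 1 else 0"])
      (use i in \<open>auto simp: vl_cA_def vl_cSum_def\<close>)
qed

lemma vl_ht_cNeg: "1 \<le> N \<Longrightarrow> vl_ht N (vl_cNeg N) = 1"
  by (subst vl_ht_eqI[where n = "\<lambda>j. if j = N then 1 else 0"])
    (auto simp: vl_cNeg_def intro: exI[of _ 0])

lemma vl_ht_zero: "vl_ht N (\<lambda>_. 0) = 0"
  by (subst vl_ht_eqI[where n = "\<lambda>_. 0"]) auto

lemma vl_cNeg_cSum_cancel:
  "(\<lambda>j. vl_cNeg N j + vl_cSum N j) = (\<lambda>_. 0)" "(\<lambda>j. vl_cSum N j + vl_cNeg N j) = (\<lambda>_. 0)"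
  by (auto simp: vl_cNeg_def vl_cSum_def)

lemma vl_qexp_cA_cSum: "i < N \<Longrightarrow> vl_qexp N (vl_cA i) (vl_cSum N) = 0"
  by (simp add: vl_qexp_def vl_ht_cA vl_ht_cSum vl_ht_cA_plus_cSum)

lemma vl_qexp_cNeg_cSum: "1 \<le> N \<Longrightarrow> vl_qexp N (vl_cNeg N) (vl_cSum N) = N + 1"
  by (simp add: vl_qexp_def vl_ht_cNeg vl_ht_cSum vl_cNeg_cSum_cancel vl_ht_zero)

section \<open>The cocycle\<close>

lemma vl_lin_sum_single:
  assumes "finite I"
  shows "vl_lin f (\<lambda>v. \<Sum>t\<in>I. c t * vl_single (x t) v) = (\<lambda>v. \<Sum>t\<in>I. c t * f (x t) v)"
proof
  fix v
  let ?u = "\<lambda>v. \<Sum>t\<in>I. c t * vl_single (x t) v"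
  have supp: "{z. ?u z \<noteq> 0} \<subseteq> x ` I"
    by (auto simp: vl_single_def elim: sum.not_neutral_contains_not_neutral split: if_splits)
  have "vl_lin f ?u v = (\<Sum>z\<in>x ` I. ?u z * f z v)"
    unfolding vl_lin_def by (rule sum.mono_neutral_left) (use assms supp in auto)
  also have "\<dots> = (\<Sum>t\<in>I. \<Sum>z\<in>x ` I. c t * vl_single (x t) z * f z v)"
    by (simp add: sum_distrib_right sum.swap[of _ "x ` I"])
  also have "\<dots> = (\<Sum>t\<in>I. c t * f (x t) v)"
    using assms by (intro sum.cong refl)
      (simp add: vl_single_def if_distrib if_distribR sum.delta cong: if_cong)
  finally show "vl_lin f ?u v = (\<Sum>t\<in>I. c t * f (x t) v)" .
qed

lemma vl_Dq_basis_0_on_cSum: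
  assumes "1 \<le> N" "fst (fst x) = vl_cSum N"
  shows "vl_Dq_basis N 0 x v = (\<Sum>i<N. vl_zero_mode N (vl_cA i) i x v)"
  using assms by (simp add: vl_Dq_basis_def vl_qexp_cA_cSum vl_qexp_cNeg_cSum)

lemma vl_Dq_basis_1_minus_0_on_cSum:
  assumes "1 \<le> N" "fst (fst x) = vl_cSum N"
  shows "vl_Dq_basis N 1 x v - vl_Dq_basis N 0 x v = - (\<Sum>i<N. vl_zero_mode N (vl_cNeg N) i x v)"
  using assms by (simp add: vl_Dq_basis_def vl_qexp_cA_cSum vl_qexp_cNeg_cSum sum_subtractf)

text \<open>In the notation of the paper the seven families are, times e^{A^1 + ... + A^N}:
  A^k_{-1} A^j_{-1} Phi^k_0, B^j_{-1} A^k_{-1} Phi^k_0, A^k_{-2} Phi^k_0, B^j_{-1} Phi^k_{-1},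
  A^j_{-1} Phi^k_{-1}, Phi^k_0 Phi^j_{-1} Psi^k_{-1} and A^k_{-1} Phi^k_0 Phi^j_0 Psi^j_{-1}.\<close>

datatype cocycle_term = AAPhi | BAPhi | A2Phi | BPhi | APhi | PhiPhiPsi | APhiPhiPsi

lemma UNIV_cocycle_term: "UNIV = {AAPhi, BAPhi, A2Phi, BPhi, APhi, PhiPhiPsi, APhiPhiPsi}"
  using cocycle_term.exhaust by auto

fun cocycle_basis :: "nat \<Rightarrow> nat \<times> nat \<times> cocycle_term \<Rightarrow> vl_basis" where
  "cocycle_basis N (k, j, AAPhi) = ((vl_cSum N, \<lambda>_. 0), {#BA k 0, BA j 0#}, {FPhi k 0})"
| "cocycle_basis N (k, j, BAPhi) = ((vl_cSum N, \<lambda>_. 0), add_mset (BB j 0) {#BA k 0#}, {FPhi k 0})"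
| "cocycle_basis N (k, j, A2Phi) = ((vl_cSum N, \<lambda>_. 0), {#BA k 1#}, {FPhi k 0})"
| "cocycle_basis N (k, j, BPhi) = ((vl_cSum N, \<lambda>_. 0), {#BB j 0#}, {FPhi k 1})"
| "cocycle_basis N (k, j, APhi) = ((vl_cSum N, \<lambda>_. 0), {#BA j 0#}, {FPhi k 1})"
| "cocycle_basis N (k, j, PhiPhiPsi) = ((vl_cSum N, \<lambda>_. 0), {#}, {FPhi k 0, FPhi j 1, FPsi k 0})"
| "cocycle_basis N (k, j, APhiPhiPsi) =
     ((vl_cSum N, \<lambda>_. 0), {#BA k 0#}, {FPhi k 0, FPhi j 0, FPsi j 0})"

definition inv_Suc :: "nat \<Rightarrow> complex" where
  "inv_Suc N = 1 / (of_nat N + 1)"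

lemma of_nat_mult_inv_Suc: "of_nat N * inv_Suc N = 1 - inv_Suc N"
proof -
  have "(of_nat N + 1 :: complex) \<noteq> 0" by (metis of_nat_Suc of_nat_neq_0 add.commute)
  then show ?thesis by (simp add: inv_Suc_def field_simps)
qed

fun cocycle_coeff :: "nat \<Rightarrow> nat \<times> nat \<times> cocycle_term \<Rightarrow> complex" where
  "cocycle_coeff N (k, j, AAPhi) = - inv_Suc N"
| "cocycle_coeff N (k, j, BAPhi) = inv_Suc N - (if j = k then 1 else 0)"
| "cocycle_coeff N (k, j, A2Phi) = (if j = k then (1 - inv_Suc N) / 2 else 0)"
| "cocycle_coeff N (k, j, BPhi) = (if j = k then 1 else 0) - inv_Suc N"
| "cocycle_coeff N (k, j, APhi) = inv_Suc N - (if j = k then (1 - inv_Suc N) / 2 else 0)"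
| "cocycle_coeff N (k, j, PhiPhiPsi) =
     (if j = k then inv_Suc N - 1 else if k < j then inv_Suc N else - inv_Suc N)"
| "cocycle_coeff N (k, j, APhiPhiPsi) =
     (if j = k then 0 else if k < j then inv_Suc N else - inv_Suc N)"

definition cocycle_index :: "nat \<Rightarrow> (nat \<times> nat \<times> cocycle_term) set" where
  "cocycle_index N = {..<N} \<times> {..<N} \<times> UNIV"

definition cocycle :: "nat \<Rightarrow> vl_vec" where
  "cocycle N = (\<lambda>v. \<Sum>t\<in>cocycle_index N. cocycle_coeff N t * vl_single (cocycle_basis N t) v)"

lemma finite_cocycle_index: "finite (cocycle_index N)"
  by (simp add: cocycle_index_def UNIV_cocycle_term)

lemma sum_cocycle_index:
  "(\<Sum>t\<in>cocycle_index N. g t) = (\<Sum>k<N. \<Sum>j<N. g (k, j, AAPhi) + g (k, j, BAPhi) + g (k, j, A2Phi)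
     + g (k, j, BPhi) + g (k, j, APhi) + g (k, j, PhiPhiPsi) + g (k, j, APhiPhiPsi))"
  by (simp add: cocycle_index_def UNIV_cocycle_term sum.cartesian_product' algebra_simps)

lemma fst_cocycle_basis: "fst (fst (cocycle_basis N t)) = vl_cSum N"
  by (induct N t rule: cocycle_basis.induct) simp_all

lemma vl_dplus_cocycle:
  assumes "1 \<le> N"
  shows "vl_dplus N (cocycle N) v = (\<Sum>t\<in>cocycle_index N.
     cocycle_coeff N t * (\<Sum>i<N. vl_zero_mode N (vl_cA i) i (cocycle_basis N t) v))"
  unfolding vl_dplus_def vl_Dq_def cocycle_def
  by (simp add: vl_lin_sum_single finite_cocycle_index vl_Dq_basis_0_on_cSum[OF assms]
      fst_cocycle_basis)

lemma vl_dminus_cocycle: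
  assumes "1 \<le> N"
  shows "vl_dminus N (cocycle N) v = (\<Sum>t\<in>cocycle_index N.
     cocycle_coeff N t * - (\<Sum>i<N. vl_zero_mode N (vl_cNeg N) i (cocycle_basis N t) v))"
proof -
  have "vl_dminus N (cocycle N) v = (\<Sum>t\<in>cocycle_index N. cocycle_coeff N t *
      (vl_Dq_basis N 1 (cocycle_basis N t) v - vl_Dq_basis N 0 (cocycle_basis N t) v))"
    unfolding vl_dminus_def vl_Dq_def cocycle_def
    by (simp add: vl_lin_sum_single finite_cocycle_index sum_subtractf right_diff_distrib)
  then show ?thesis by (simp only: vl_Dq_basis_1_minus_0_on_cSum[OF assms fst_cocycle_basis])
qed

section \<open>The zero modes on the cocycle\<close>

lemma vl_fless_simps [simp]:
  "vl_fless (FPhi a m) (FPhi b m') \<longleftrightarrow> a < b \<or> (a = b \<and> m < m')"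
  "vl_fless (FPsi a m) (FPsi b m') \<longleftrightarrow> a < b \<or> (a = b \<and> m < m')"
  "vl_fless (FPhi a m) (FPsi b m')"
  "\<not> vl_fless (FPsi a m) (FPhi b m')"
  by (auto simp: vl_fless_def)

lemma Collect_mem_insert_conj:
  "{z \<in> insert a A. P z} = (if P a then insert a {z \<in> A. P z} else {z \<in> A. P z})"
  by auto

lemma Collect_disj_conj:
  "{z. (z = a \<or> Q z) \<and> P z} = (if P a then insert a {z. Q z \<and> P z} else {z. Q z \<and> P z})"
  by auto

lemma of_int_vl_cA_mult:
  "(of_int (vl_cA i n) :: complex) * x = (if n = i then x else 0)"
  "(of_int (vl_cA i n) :: complex) / 2 * x = (if n = i then x / 2 else 0)"
  by (simp_all add: vl_cA_def)

lemma of_int_vl_cNeg: "n < N \<Longrightarrow> (of_int (vl_cNeg N n) :: complex) = -1"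
  by (simp add: vl_cNeg_def)

lemma vl_cA_supp: "i < N \<Longrightarrow> \<forall>n. vl_cA i n \<noteq> 0 \<longrightarrow> n < N"
  by (simp add: vl_cA_def)

lemma vl_cNeg_supp: "\<forall>n. vl_cNeg N n \<noteq> 0 \<longrightarrow> n < N"
  by (simp add: vl_cNeg_def)

lemma sum_if_zero: "(\<Sum>x\<in>A. if P then f x else 0) = (if P then sum f A else 0)"
  by simp

lemma if_zero_mult_divide:
  fixes x y :: "'a::field"
  shows "(if P then x else 0) * y = (if P then x * y else 0)"
    "(if P then x else 0) / y = (if P then x / y else 0)"
  by simp_all

lemmas zero_mode_simps = sum_if_zero if_zero_mult_divide One_nat_def if_distribR insert_Diff_if
  vl_psi_annihilate[of _ 0, simplified] vl_psi_annihilate[of _ 1, simplified, unfolded One_nat_def]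
  vl_psi_create Collect_mem_insert_conj Collect_conv_if Collect_disj_conj

abbreviation single_cA :: "nat \<Rightarrow> nat \<Rightarrow> vl_bos multiset \<Rightarrow> vl_ferm set \<Rightarrow> vl_vec" where
  "single_cA N i M F \<equiv> vl_single ((\<lambda>l. vl_cSum N l + vl_cA i l, \<lambda>_. 0), M, F)"

lemma zero_modes_cA_AAPhi:
  assumes "k < N" "j < N"
  shows "(\<Sum>i<N. vl_zero_mode N (vl_cA i) i (cocycle_basis N (k, j, AAPhi)) v) =
    single_cA N k {#BA k 0, BA j 0#} {} v"
proof -
  have "vl_zero_mode N (vl_cA i) i (cocycle_basis N (k, j, AAPhi)) v =
      (if i = k then single_cA N k {#BA k 0, BA j 0#} {} v else 0)" if "i < N" for i
    using that unfolding cocycle_basis.simps by (subst vl_zero_mode_no_B[OF _ vl_cA_supp])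
      (auto simp: zero_mode_simps of_int_vl_cA_mult)
  then show ?thesis using assms by simp
qed

lemma zero_modes_cA_BAPhi:
  assumes "k < N" "j < N"
  shows "(\<Sum>i<N. vl_zero_mode N (vl_cA i) i (cocycle_basis N (k, j, BAPhi)) v) =
    single_cA N k (add_mset (BB j 0) {#BA k 0#}) {} v
    + single_cA N j {#BA k 0#} {FPsi j 0, FPhi k 0} v
    - (if j = k then single_cA N k {#BA k 0, BA k 0#} {} v else 0)"
proof -
  have "vl_zero_mode N (vl_cA i) i (cocycle_basis N (k, j, BAPhi)) v =
      (if i = k then single_cA N k (add_mset (BB j 0) {#BA k 0#}) {} v else 0)
    + (if j = i then single_cA N i {#BA k 0#} {FPsi i 0, FPhi k 0} v else 0)
    - (if i = k then (if j = k then single_cA N i {#BA i 0, BA k 0#} {} v else 0) else 0)"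
    if "i < N" for i
    using that unfolding cocycle_basis.simps by (subst vl_zero_mode_one_B[OF _ vl_cA_supp])
      (auto simp: zero_mode_simps of_int_vl_cA_mult)
  then show ?thesis using assms by (simp add: sum.distrib sum_subtractf)
qed

lemma zero_modes_cA_A2Phi:
  assumes "k < N"
  shows "(\<Sum>i<N. vl_zero_mode N (vl_cA i) i (cocycle_basis N (k, j, A2Phi)) v) =
    single_cA N k {#BA k 1#} {} v"
proof -
  have "vl_zero_mode N (vl_cA i) i (cocycle_basis N (k, j, A2Phi)) v =
      (if i = k then single_cA N k {#BA k 1#} {} v else 0)" if "i < N" for i
    using that unfolding cocycle_basis.simps by (subst vl_zero_mode_no_B[OF _ vl_cA_supp])
      (auto simp: zero_mode_simps of_int_vl_cA_mult)
  then show ?thesis using assms by simp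
qed

lemma zero_modes_cA_BPhi:
  assumes "k < N" "j < N"
  shows "(\<Sum>i<N. vl_zero_mode N (vl_cA i) i (cocycle_basis N (k, j, BPhi)) v) =
    single_cA N k {#BA k 0, BB j 0#} {} v + single_cA N j {#} {FPsi j 0, FPhi k 1} v
    - (if j = k then single_cA N k {#BA k 1#} {} v / 2 + single_cA N k {#BA k 0, BA k 0#} {} v / 2
       else 0)"
proof -
  have "vl_zero_mode N (vl_cA i) i (cocycle_basis N (k, j, BPhi)) v =
      (if i = k then single_cA N k {#BA k 0, BB j 0#} {} v else 0)
    + (if j = i then single_cA N i {#} {FPsi i 0, FPhi k 1} v else 0)
    - (if i = k then (if j = k then single_cA N i {#BA i 1#} {} v / 2
         + single_cA N i {#BA i 0, BA i 0#} {} v / 2 else 0) else 0)"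
    if "i < N" for i
    using that unfolding cocycle_basis.simps by (subst vl_zero_mode_one_B[OF _ vl_cA_supp])
      (auto simp: zero_mode_simps of_int_vl_cA_mult cong: if_cong)
  then show ?thesis using assms by (simp add: sum.distrib sum_subtractf)
qed

lemma zero_modes_cA_APhi:
  assumes "k < N" "j < N"
  shows "(\<Sum>i<N. vl_zero_mode N (vl_cA i) i (cocycle_basis N (k, j, APhi)) v) =
    single_cA N k {#BA k 0, BA j 0#} {} v"
proof -
  have "vl_zero_mode N (vl_cA i) i (cocycle_basis N (k, j, APhi)) v =
      (if i = k then single_cA N k {#BA k 0, BA j 0#} {} v else 0)" if "i < N" for i
    using that unfolding cocycle_basis.simps by (subst vl_zero_mode_no_B[OF _ vl_cA_supp])
      (auto simp: zero_mode_simps of_int_vl_cA_mult)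
  then show ?thesis using assms by simp
qed

lemma zero_modes_cA_PhiPhiPsi:
  assumes "k < N" "j < N"
  shows "(\<Sum>i<N. vl_zero_mode N (vl_cA i) i (cocycle_basis N (k, j, PhiPhiPsi)) v) =
      (if j < k then -1 else 1) * single_cA N k {#} {FPhi j 1, FPsi k 0} v
    + (if k \<le> j then -1 else 1) * single_cA N j {#BA j 0#} {FPhi k 0, FPsi k 0} v"
proof -
  have "vl_zero_mode N (vl_cA i) i (cocycle_basis N (k, j, PhiPhiPsi)) v =
      (if i = k then (if j < k then -1 else 1) * single_cA N k {#} {FPhi j 1, FPsi k 0} v else 0)
    + (if i = j then (if k \<le> j then -1 else 1) * single_cA N j {#BA j 0#} {FPhi k 0, FPsi k 0} v
       else 0)"
    if "i < N" for i
    using that unfolding cocycle_basis.simps by (subst vl_zero_mode_no_B[OF _ vl_cA_supp])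
      (auto simp: zero_mode_simps of_int_vl_cA_mult)
  then show ?thesis using assms by (simp add: sum.distrib)
qed

lemma zero_modes_cA_APhiPhiPsi:
  assumes "k < N" "j < N" "j \<noteq> k"
  shows "(\<Sum>i<N. vl_zero_mode N (vl_cA i) i (cocycle_basis N (k, j, APhiPhiPsi)) v) =
      (if j < k then -1 else 1) * single_cA N k {#BA k 0#} {FPhi j 0, FPsi j 0} v
    + (if k < j then -1 else 1) * single_cA N j {#BA k 0#} {FPhi k 0, FPsi j 0} v"
proof -
  have "vl_zero_mode N (vl_cA i) i (cocycle_basis N (k, j, APhiPhiPsi)) v =
      (if i = k then (if j < k then -1 else 1) * single_cA N k {#BA k 0#} {FPhi j 0, FPsi j 0} v
       else 0)
    + (if i = j then (if k < j then -1 else 1) * single_cA N j {#BA k 0#} {FPhi k 0, FPsi j 0} v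
       else 0)"
    if "i < N" for i
    using that assms(3) unfolding cocycle_basis.simps
    by (subst vl_zero_mode_no_B[OF _ vl_cA_supp]) (auto simp: zero_mode_simps of_int_vl_cA_mult)
  then show ?thesis using assms by (simp add: sum.distrib)
qed

abbreviation single_0 :: "vl_bos multiset \<Rightarrow> vl_ferm set \<Rightarrow> vl_vec" where
  "single_0 M F \<equiv> vl_single ((\<lambda>_. 0, \<lambda>_. 0), M, F)"

lemmas zero_mode_cNeg_simps = zero_mode_simps of_int_vl_cNeg vl_cNeg_cSum_cancel
  sum_negf sum_divide_distrib sum_distrib_left

lemma zero_modes_cNeg_AAPhi:
  assumes "k < N" "j < N"
  shows "(\<Sum>i<N. vl_zero_mode N (vl_cNeg N) i (cocycle_basis N (k, j, AAPhi)) v) =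
    single_0 {#BA k 0, BA j 0#} {} v"
proof -
  have "vl_zero_mode N (vl_cNeg N) i (cocycle_basis N (k, j, AAPhi)) v =
      (if i = k then single_0 {#BA k 0, BA j 0#} {} v else 0)" if "i < N" for i
    using that unfolding cocycle_basis.simps by (subst vl_zero_mode_no_B[OF _ vl_cNeg_supp])
      (auto simp: zero_mode_cNeg_simps cong: if_cong)
  then show ?thesis using assms by simp
qed

lemma zero_modes_cNeg_BAPhi:
  assumes "k < N" "j < N"
  shows "(\<Sum>i<N. vl_zero_mode N (vl_cNeg N) i (cocycle_basis N (k, j, BAPhi)) v) =
    single_0 (add_mset (BB j 0) {#BA k 0#}) {} v
    - (\<Sum>i<N. single_0 {#BA k 0#} {FPsi i 0, FPhi k 0} v)
    - (\<Sum>n<N. single_0 {#BA n 0, BA k 0#} {} v)"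
proof -
  have "vl_zero_mode N (vl_cNeg N) i (cocycle_basis N (k, j, BAPhi)) v =
      (if i = k then single_0 (add_mset (BB j 0) {#BA k 0#}) {} v else 0)
    - single_0 {#BA k 0#} {FPsi i 0, FPhi k 0} v
    - (if i = k then (\<Sum>n<N. single_0 {#BA n 0, BA k 0#} {} v) else 0)" if "i < N" for i
    using that assms unfolding cocycle_basis.simps
    by (subst vl_zero_mode_one_B[OF _ vl_cNeg_supp]) (auto simp: zero_mode_cNeg_simps cong: if_cong)
  then show ?thesis using assms by (simp add: sum.distrib sum_subtractf)
qed

lemma zero_modes_cNeg_A2Phi:
  assumes "k < N"
  shows "(\<Sum>i<N. vl_zero_mode N (vl_cNeg N) i (cocycle_basis N (k, j, A2Phi)) v) =
    single_0 {#BA k 1#} {} v"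
proof -
  have "vl_zero_mode N (vl_cNeg N) i (cocycle_basis N (k, j, A2Phi)) v =
      (if i = k then single_0 {#BA k 1#} {} v else 0)" if "i < N" for i
    using that unfolding cocycle_basis.simps by (subst vl_zero_mode_no_B[OF _ vl_cNeg_supp])
      (auto simp: zero_mode_cNeg_simps cong: if_cong)
  then show ?thesis using assms by simp
qed

lemma zero_modes_cNeg_BPhi:
  assumes "k < N" "j < N"
  shows "(\<Sum>i<N. vl_zero_mode N (vl_cNeg N) i (cocycle_basis N (k, j, BPhi)) v) =
    - (\<Sum>n<N. single_0 {#BA n 0, BB j 0#} {} v) - (\<Sum>i<N. single_0 {#} {FPsi i 0, FPhi k 1} v)
    - (\<Sum>n<N. single_0 {#BA n 1#} {} v) / 2 + (\<Sum>n<N. \<Sum>n'<N. single_0 {#BA n 0, BA n' 0#} {} v) / 2"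
proof -
  have "vl_zero_mode N (vl_cNeg N) i (cocycle_basis N (k, j, BPhi)) v =
      - (if i = k then (\<Sum>n<N. single_0 {#BA n 0, BB j 0#} {} v) else 0)
    - single_0 {#} {FPsi i 0, FPhi k 1} v
    - (if i = k then (\<Sum>n<N. single_0 {#BA n 1#} {} v) / 2 else 0)
    + (if i = k then (\<Sum>n<N. \<Sum>n'<N. single_0 {#BA n 0, BA n' 0#} {} v) / 2 else 0)"
    if "i < N" for i
    using that assms unfolding cocycle_basis.simps
    by (subst vl_zero_mode_one_B[OF _ vl_cNeg_supp]) (auto simp: zero_mode_cNeg_simps cong: if_cong)
  then show ?thesis using assms by (simp add: sum.distrib sum_subtractf sum_negf)
qed

lemma zero_modes_cNeg_APhi:
  assumes "k < N" "j < N"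
  shows "(\<Sum>i<N. vl_zero_mode N (vl_cNeg N) i (cocycle_basis N (k, j, APhi)) v) =
    - (\<Sum>n<N. single_0 {#BA n 0, BA j 0#} {} v)"
proof -
  have "vl_zero_mode N (vl_cNeg N) i (cocycle_basis N (k, j, APhi)) v =
      - (if i = k then (\<Sum>n<N. single_0 {#BA n 0, BA j 0#} {} v) else 0)" if "i < N" for i
    using that unfolding cocycle_basis.simps by (subst vl_zero_mode_no_B[OF _ vl_cNeg_supp])
      (auto simp: zero_mode_cNeg_simps cong: if_cong)
  then show ?thesis using assms by (simp add: sum_negf)
qed

lemma zero_modes_cNeg_PhiPhiPsi:
  assumes "k < N" "j < N"
  shows "(\<Sum>i<N. vl_zero_mode N (vl_cNeg N) i (cocycle_basis N (k, j, PhiPhiPsi)) v) =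
      (if j < k then -1 else 1) * single_0 {#} {FPhi j 1, FPsi k 0} v
    - (if k \<le> j then -1 else 1) * (\<Sum>n<N. single_0 {#BA n 0#} {FPhi k 0, FPsi k 0} v)"
proof -
  have "vl_zero_mode N (vl_cNeg N) i (cocycle_basis N (k, j, PhiPhiPsi)) v =
      (if i = k then (if j < k then -1 else 1) * single_0 {#} {FPhi j 1, FPsi k 0} v else 0)
    - (if i = j then (if k \<le> j then -1 else 1) * (\<Sum>n<N. single_0 {#BA n 0#} {FPhi k 0, FPsi k 0} v)
       else 0)" if "i < N" for i
    using that unfolding cocycle_basis.simps by (subst vl_zero_mode_no_B[OF _ vl_cNeg_supp])
      (auto simp: zero_mode_cNeg_simps cong: if_cong)
  then show ?thesis using assms by (simp add: sum_subtractf)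
qed

lemma zero_modes_cNeg_APhiPhiPsi:
  assumes "k < N" "j < N" "j \<noteq> k"
  shows "(\<Sum>i<N. vl_zero_mode N (vl_cNeg N) i (cocycle_basis N (k, j, APhiPhiPsi)) v) =
      (if j < k then -1 else 1) * single_0 {#BA k 0#} {FPhi j 0, FPsi j 0} v
    + (if k < j then -1 else 1) * single_0 {#BA k 0#} {FPhi k 0, FPsi j 0} v"
proof -
  have "vl_zero_mode N (vl_cNeg N) i (cocycle_basis N (k, j, APhiPhiPsi)) v =
      (if i = k then (if j < k then -1 else 1) * single_0 {#BA k 0#} {FPhi j 0, FPsi j 0} v else 0)
    + (if i = j then (if k < j then -1 else 1) * single_0 {#BA k 0#} {FPhi k 0, FPsi j 0} v else 0)"
    if "i < N" for i
    using that assms(3) unfolding cocycle_basis.simps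
    by (subst vl_zero_mode_no_B[OF _ vl_cNeg_supp]) (auto simp: zero_mode_cNeg_simps cong: if_cong)
  then show ?thesis using assms by (simp add: sum.distrib)
qed

section \<open>Cancellations\<close>

lemma sum_sum_add_transpose:
  fixes E Q :: "nat \<Rightarrow> nat \<Rightarrow> 'a::ab_group_add"
  shows "(\<Sum>k<N. \<Sum>j<N. E k j) = (\<Sum>k<N. \<Sum>j<N. E k j - Q k j + Q j k)"
  using sum.swap[of "\<lambda>k j. Q j k" "{..<N}" "{..<N}"] by (simp add: sum.distrib sum_subtractf)

definition dplus_cocycle_summand :: "nat \<Rightarrow> vl_basis \<Rightarrow> nat \<Rightarrow> nat \<Rightarrow> complex" where
  "dplus_cocycle_summand N v k j =
     cocycle_coeff N (k, j, AAPhi) * single_cA N k {#BA k 0, BA j 0#} {} v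
   + cocycle_coeff N (k, j, BAPhi) * (single_cA N k (add_mset (BB j 0) {#BA k 0#}) {} v
       + single_cA N j {#BA k 0#} {FPsi j 0, FPhi k 0} v
       - (if j = k then single_cA N k {#BA k 0, BA k 0#} {} v else 0))
   + cocycle_coeff N (k, j, A2Phi) * single_cA N k {#BA k 1#} {} v
   + cocycle_coeff N (k, j, BPhi) * (single_cA N k {#BA k 0, BB j 0#} {} v
       + single_cA N j {#} {FPsi j 0, FPhi k 1} v
       - (if j = k then single_cA N k {#BA k 1#} {} v / 2
            + single_cA N k {#BA k 0, BA k 0#} {} v / 2 else 0))
   + cocycle_coeff N (k, j, APhi) * single_cA N k {#BA k 0, BA j 0#} {} v
   + cocycle_coeff N (k, j, PhiPhiPsi) *
      ((if j < k then -1 else 1) * single_cA N k {#} {FPhi j 1, FPsi k 0} v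
       + (if k \<le> j then -1 else 1) * single_cA N j {#BA j 0#} {FPhi k 0, FPsi k 0} v)
   + cocycle_coeff N (k, j, APhiPhiPsi) *
       ((if j < k then -1 else 1) * single_cA N k {#BA k 0#} {FPhi j 0, FPsi j 0} v
       + (if k < j then -1 else 1) * single_cA N j {#BA k 0#} {FPhi k 0, FPsi j 0} v)"

definition dplus_transposed_part :: "nat \<Rightarrow> vl_basis \<Rightarrow> nat \<Rightarrow> nat \<Rightarrow> complex" where
  "dplus_transposed_part N v k j =
     cocycle_coeff N (k, j, PhiPhiPsi) * (if j < k then -1 else 1) *
       single_cA N k {#} {FPhi j 1, FPsi k 0} v
   + cocycle_coeff N (k, j, APhiPhiPsi) * (if j < k then -1 else 1) *
       single_cA N k {#BA k 0#} {FPhi j 0, FPsi j 0} v"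

lemma dplus_cocycle_summand_cancel:
  "dplus_cocycle_summand N v k j - dplus_transposed_part N v k j
     + dplus_transposed_part N v j k = 0"
  unfolding dplus_cocycle_summand_def dplus_transposed_part_def
  by (cases j k rule: linorder_cases) (simp_all add: insert_commute add_mset_commute algebra_simps)

lemma vl_dplus_cocycle_eq_0:
  assumes "1 \<le> N"
  shows "vl_dplus N (cocycle N) = (\<lambda>_. 0)"
proof
  fix v
  have "vl_dplus N (cocycle N) v = (\<Sum>k<N. \<Sum>j<N. dplus_cocycle_summand N v k j)"
    unfolding vl_dplus_cocycle[OF assms] sum_cocycle_index dplus_cocycle_summand_def
    by (intro sum.cong refl)
      (simp del: cocycle_basis.simps add: zero_modes_cA_AAPhi zero_modes_cA_BAPhi
        zero_modes_cA_A2Phi zero_modes_cA_BPhi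
        zero_modes_cA_APhi zero_modes_cA_PhiPhiPsi zero_modes_cA_APhiPhiPsi)
  also have "\<dots> = (\<Sum>k<N. \<Sum>j<N. dplus_cocycle_summand N v k j
      - dplus_transposed_part N v k j + dplus_transposed_part N v j k)"
    by (rule sum_sum_add_transpose)
  finally show "vl_dplus N (cocycle N) v = 0" by (simp add: dplus_cocycle_summand_cancel)
qed

lemma sum_mult_sum_eq_sum_mult:
  fixes c X :: "nat \<Rightarrow> 'a::comm_semiring_0"
  shows "(\<Sum>j<N. c j * (\<Sum>i<N. X i)) = (\<Sum>j<N. (\<Sum>j'<N. c j') * X j)"
proof -
  have "(\<Sum>j<N. c j * (\<Sum>i<N. X i)) = (\<Sum>j<N. c j) * (\<Sum>i<N. X i)"
    by (rule sum_distrib_right[symmetric])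
  also have "\<dots> = (\<Sum>j<N. (\<Sum>j'<N. c j') * X j)"
    by (rule sum_distrib_left)
  finally show ?thesis .
qed

lemma sum_sum_mult_row_sum:
  fixes c X :: "nat \<Rightarrow> nat \<Rightarrow> 'a::comm_semiring_0"
  shows "(\<Sum>k<N. \<Sum>j<N. c k j * (\<Sum>i<N. X k i)) = (\<Sum>k<N. \<Sum>j<N. (\<Sum>j'<N. c k j') * X k j)"
  by (rule sum.cong[OF refl]) (rule sum_mult_sum_eq_sum_mult)

lemma sum_sum_mult_column_sum:
  fixes c X :: "nat \<Rightarrow> nat \<Rightarrow> 'a::comm_semiring_0"
  shows "(\<Sum>k<N. \<Sum>j<N. c k j * (\<Sum>n<N. X n j)) = (\<Sum>k<N. \<Sum>j<N. (\<Sum>k'<N. c k' j) * X k j)"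
proof -
  have "(\<Sum>k<N. \<Sum>j<N. c k j * (\<Sum>n<N. X n j)) = (\<Sum>j<N. \<Sum>k<N. c k j * (\<Sum>n<N. X n j))"
    by (rule sum.swap)
  also have "\<dots> = (\<Sum>j<N. \<Sum>k<N. (\<Sum>k'<N. c k' j) * X k j)"
    by (rule sum_sum_mult_row_sum[where c = "\<lambda>j k. c k j" and X = "\<lambda>j n. X n j"])
  also have "\<dots> = (\<Sum>k<N. \<Sum>j<N. (\<Sum>k'<N. c k' j) * X k j)"
    by (rule sum.swap)
  finally show ?thesis .
qed

lemma sum_sum_mult_sum_sum:
  fixes c W :: "nat \<Rightarrow> nat \<Rightarrow> 'a::comm_semiring_0"
  shows "(\<Sum>k<N. \<Sum>j<N. c k j * (\<Sum>n<N. \<Sum>n'<N. W n n')) =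
    (\<Sum>k<N. \<Sum>j<N. (\<Sum>k'<N. \<Sum>j'<N. c k' j') * W k j)"
proof -
  have "(\<Sum>k<N. \<Sum>j<N. c k j * (\<Sum>n<N. \<Sum>n'<N. W n n')) =
      (\<Sum>k<N. \<Sum>j<N. c k j) * (\<Sum>n<N. \<Sum>n'<N. W n n')"
    by (simp add: sum_distrib_right)
  also have "\<dots> = (\<Sum>k<N. \<Sum>j<N. (\<Sum>k'<N. \<Sum>j'<N. c k' j') * W k j)"
    by (simp add: sum_distrib_left)
  finally show ?thesis .
qed

lemma sum_sum_mult_sum_diagonal:
  fixes c :: "nat \<Rightarrow> nat \<Rightarrow> 'a::comm_semiring_0" and Z :: "nat \<Rightarrow> 'a"
  shows "(\<Sum>k<N. \<Sum>j<N. c k j * (\<Sum>n<N. Z n)) =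
    (\<Sum>k<N. \<Sum>j<N. if j = k then (\<Sum>k'<N. \<Sum>j'<N. c k' j') * Z k else 0)"
proof -
  have "(\<Sum>k<N. \<Sum>j<N. c k j * (\<Sum>n<N. Z n)) = (\<Sum>k<N. \<Sum>j<N. c k j) * (\<Sum>n<N. Z n)"
    by (simp add: sum_distrib_right)
  also have "\<dots> = (\<Sum>k<N. \<Sum>j<N. if j = k then (\<Sum>k'<N. \<Sum>j'<N. c k' j') * Z k else 0)"
    by (simp add: sum_distrib_left)
  finally show ?thesis .
qed

lemma sum_cocycle_coeff_BAPhi_row: "k < N \<Longrightarrow> (\<Sum>j<N. cocycle_coeff N (k, j, BAPhi)) = - inv_Suc N"
  by (simp add: sum_subtractf of_nat_mult_inv_Suc)

lemma sum_cocycle_coeff_BPhi_row: "k < N \<Longrightarrow> (\<Sum>j<N. cocycle_coeff N (k, j, BPhi)) = inv_Suc N"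
  by (simp add: sum_subtractf of_nat_mult_inv_Suc)

lemma sum_cocycle_coeff_BPhi_column: "j < N \<Longrightarrow> (\<Sum>k<N. cocycle_coeff N (k, j, BPhi)) = inv_Suc N"
  by (simp add: sum_subtractf of_nat_mult_inv_Suc)

lemma sum_sum_cocycle_coeff_BPhi: "(\<Sum>k<N. \<Sum>j<N. cocycle_coeff N (k, j, BPhi)) = 1 - inv_Suc N"
  by (simp del: cocycle_coeff.simps add: sum_cocycle_coeff_BPhi_row of_nat_mult_inv_Suc)

lemma sum_cocycle_coeff_APhi_column:
  "j < N \<Longrightarrow> (\<Sum>k<N. cocycle_coeff N (k, j, APhi)) = (1 - inv_Suc N) / 2"
  by (simp add: sum_subtractf of_nat_mult_inv_Suc field_simps)

lemma sum_cocycle_coeff_PhiPhiPsi_row: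
  assumes "k < N"
  shows "(\<Sum>j<N. cocycle_coeff N (k, j, PhiPhiPsi) * (if k \<le> j then -1 else 1)) = inv_Suc N"
proof -
  have "cocycle_coeff N (k, j, PhiPhiPsi) * (if k \<le> j then -1 else 1) =
      (if j = k then 1 else 0) - inv_Suc N" for j
    by auto
  then show ?thesis using assms by (simp add: sum_subtractf of_nat_mult_inv_Suc)
qed

lemma dminus_contribution_BAPhi:
  "(\<Sum>k<N. \<Sum>j<N. cocycle_coeff N (k, j, BAPhi) *
      - (\<Sum>i<N. vl_zero_mode N (vl_cNeg N) i (cocycle_basis N (k, j, BAPhi)) v)) =
   (\<Sum>k<N. \<Sum>j<N. - cocycle_coeff N (k, j, BAPhi) * single_0 (add_mset (BB j 0) {#BA k 0#}) {} v
      - inv_Suc N * single_0 {#BA k 0#} {FPsi j 0, FPhi k 0} v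
      - inv_Suc N * single_0 {#BA j 0, BA k 0#} {} v)"
  (is "?lhs = _")
proof -
  let ?c = "\<lambda>k j. cocycle_coeff N (k, j, BAPhi)"
  have "?lhs = (\<Sum>k<N. \<Sum>j<N. - ?c k j * single_0 (add_mset (BB j 0) {#BA k 0#}) {} v
      + ?c k j * (\<Sum>i<N. single_0 {#BA k 0#} {FPsi i 0, FPhi k 0} v)
      + ?c k j * (\<Sum>n<N. single_0 {#BA n 0, BA k 0#} {} v))"
    by (intro sum.cong refl)
      (simp del: cocycle_basis.simps cocycle_coeff.simps add: zero_modes_cNeg_BAPhi algebra_simps)
  also have "\<dots> = (\<Sum>k<N. \<Sum>j<N. - ?c k j * single_0 (add_mset (BB j 0) {#BA k 0#}) {} v
      + (\<Sum>j'<N. ?c k j') * single_0 {#BA k 0#} {FPsi j 0, FPhi k 0} v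
      + (\<Sum>j'<N. ?c k j') * single_0 {#BA j 0, BA k 0#} {} v)"
    by (simp only: sum.distrib sum_sum_mult_row_sum)
  finally show ?thesis
    by (simp del: cocycle_coeff.simps add: sum_cocycle_coeff_BAPhi_row)
qed

lemma dminus_contribution_BPhi:
  "(\<Sum>k<N. \<Sum>j<N. cocycle_coeff N (k, j, BPhi) *
      - (\<Sum>i<N. vl_zero_mode N (vl_cNeg N) i (cocycle_basis N (k, j, BPhi)) v)) =
   (\<Sum>k<N. \<Sum>j<N. inv_Suc N * single_0 {#BA k 0, BB j 0#} {} v
      + inv_Suc N * single_0 {#} {FPsi j 0, FPhi k 1} v
      + (if j = k then (1 - inv_Suc N) / 2 * single_0 {#BA k 1#} {} v else 0)
      - (1 - inv_Suc N) / 2 * single_0 {#BA k 0, BA j 0#} {} v)"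
  (is "?lhs = _")
proof -
  let ?c = "\<lambda>k j. cocycle_coeff N (k, j, BPhi)"
  have "?lhs = (\<Sum>k<N. \<Sum>j<N. ?c k j * (\<Sum>n<N. single_0 {#BA n 0, BB j 0#} {} v)
      + ?c k j * (\<Sum>i<N. single_0 {#} {FPsi i 0, FPhi k 1} v)
      + ?c k j / 2 * (\<Sum>n<N. single_0 {#BA n 1#} {} v)
      + - ?c k j / 2 * (\<Sum>n<N. \<Sum>n'<N. single_0 {#BA n 0, BA n' 0#} {} v))"
    by (intro sum.cong refl) (simp del: cocycle_basis.simps cocycle_coeff.simps
        add: zero_modes_cNeg_BPhi algebra_simps)
  also have "\<dots> = (\<Sum>k<N. \<Sum>j<N. (\<Sum>k'<N. ?c k' j) * single_0 {#BA k 0, BB j 0#} {} v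
      + (\<Sum>j'<N. ?c k j') * single_0 {#} {FPsi j 0, FPhi k 1} v
      + (if j = k then (\<Sum>k'<N. \<Sum>j'<N. ?c k' j' / 2) * single_0 {#BA k 1#} {} v else 0)
      + (\<Sum>k'<N. \<Sum>j'<N. - ?c k' j' / 2) * single_0 {#BA k 0, BA j 0#} {} v)"
    by (simp only: sum.distrib sum_sum_mult_sum_diagonal[where c = "\<lambda>k j. ?c k j / 2"]
        sum_sum_mult_sum_sum[where c = "\<lambda>k j. - ?c k j / 2"],
      simp only: sum_sum_mult_row_sum sum_sum_mult_column_sum)
  also have "(\<Sum>k'<N. \<Sum>j'<N. ?c k' j' / 2) = (1 - inv_Suc N) / 2"
    by (simp del: cocycle_coeff.simps add: sum_divide_distrib[symmetric] sum_sum_cocycle_coeff_BPhi)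
  also have "(\<Sum>k'<N. \<Sum>j'<N. - ?c k' j' / 2) = - ((1 - inv_Suc N) / 2)"
    by (simp del: cocycle_coeff.simps add: sum_negf sum_divide_distrib[symmetric]
        sum_sum_cocycle_coeff_BPhi)
  finally show ?thesis
    by (simp del: cocycle_coeff.simps add: sum_cocycle_coeff_BPhi_row sum_cocycle_coeff_BPhi_column)
qed

lemma dminus_contribution_APhi:
  "(\<Sum>k<N. \<Sum>j<N. cocycle_coeff N (k, j, APhi) *
      - (\<Sum>i<N. vl_zero_mode N (vl_cNeg N) i (cocycle_basis N (k, j, APhi)) v)) =
   (\<Sum>k<N. \<Sum>j<N. (1 - inv_Suc N) / 2 * single_0 {#BA k 0, BA j 0#} {} v)"
  (is "?lhs = _")
proof -
  let ?c = "\<lambda>k j. cocycle_coeff N (k, j, APhi)"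
  have "?lhs = (\<Sum>k<N. \<Sum>j<N. ?c k j * (\<Sum>n<N. single_0 {#BA n 0, BA j 0#} {} v))"
    by (intro sum.cong refl)
      (simp del: cocycle_basis.simps cocycle_coeff.simps add: zero_modes_cNeg_APhi)
  also have "\<dots> = (\<Sum>k<N. \<Sum>j<N. (\<Sum>k'<N. ?c k' j) * single_0 {#BA k 0, BA j 0#} {} v)"
    by (rule sum_sum_mult_column_sum)
  finally show ?thesis
    by (simp del: cocycle_coeff.simps add: sum_cocycle_coeff_APhi_column)
qed

lemma dminus_contribution_PhiPhiPsi:
  "(\<Sum>k<N. \<Sum>j<N. cocycle_coeff N (k, j, PhiPhiPsi) *
      - (\<Sum>i<N. vl_zero_mode N (vl_cNeg N) i (cocycle_basis N (k, j, PhiPhiPsi)) v)) =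
   (\<Sum>k<N. \<Sum>j<N. - cocycle_coeff N (k, j, PhiPhiPsi) * (if j < k then -1 else 1) *
        single_0 {#} {FPhi j 1, FPsi k 0} v
      + inv_Suc N * single_0 {#BA j 0#} {FPhi k 0, FPsi k 0} v)"
  (is "?lhs = _")
proof -
  let ?c = "\<lambda>k j. cocycle_coeff N (k, j, PhiPhiPsi)"
  have "?lhs = (\<Sum>k<N. \<Sum>j<N.
        - ?c k j * (if j < k then -1 else 1) * single_0 {#} {FPhi j 1, FPsi k 0} v
      + ?c k j * (if k \<le> j then -1 else 1) * (\<Sum>n<N. single_0 {#BA n 0#} {FPhi k 0, FPsi k 0} v))"
    by (intro sum.cong refl)
      (simp del: cocycle_basis.simps cocycle_coeff.simps
        add: zero_modes_cNeg_PhiPhiPsi algebra_simps)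
  also have "\<dots> = (\<Sum>k<N. \<Sum>j<N.
        - ?c k j * (if j < k then -1 else 1) * single_0 {#} {FPhi j 1, FPsi k 0} v
      + (\<Sum>j'<N. ?c k j' * (if k \<le> j' then -1 else 1)) * single_0 {#BA j 0#} {FPhi k 0, FPsi k 0} v)"
    by (simp only: sum.distrib
        sum_sum_mult_row_sum[where c = "\<lambda>k j. ?c k j * (if k \<le> j then -1 else 1)"])
  finally show ?thesis
    by (simp del: cocycle_coeff.simps add: sum_cocycle_coeff_PhiPhiPsi_row)
qed

lemma dminus_contributions_local:
  "(\<Sum>k<N. \<Sum>j<N. cocycle_coeff N (k, j, AAPhi) *
      - (\<Sum>i<N. vl_zero_mode N (vl_cNeg N) i (cocycle_basis N (k, j, AAPhi)) v)) =
   (\<Sum>k<N. \<Sum>j<N. - cocycle_coeff N (k, j, AAPhi) * single_0 {#BA k 0, BA j 0#} {} v)"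
  "(\<Sum>k<N. \<Sum>j<N. cocycle_coeff N (k, j, A2Phi) *
      - (\<Sum>i<N. vl_zero_mode N (vl_cNeg N) i (cocycle_basis N (k, j, A2Phi)) v)) =
   (\<Sum>k<N. \<Sum>j<N. - cocycle_coeff N (k, j, A2Phi) * single_0 {#BA k 1#} {} v)"
  "(\<Sum>k<N. \<Sum>j<N. cocycle_coeff N (k, j, APhiPhiPsi) *
      - (\<Sum>i<N. vl_zero_mode N (vl_cNeg N) i (cocycle_basis N (k, j, APhiPhiPsi)) v)) =
   (\<Sum>k<N. \<Sum>j<N. - cocycle_coeff N (k, j, APhiPhiPsi) *
      ((if j < k then -1 else 1) * single_0 {#BA k 0#} {FPhi j 0, FPsi j 0} v
       + (if k < j then -1 else 1) * single_0 {#BA k 0#} {FPhi k 0, FPsi j 0} v))"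
  by (intro sum.cong refl; simp del: cocycle_basis.simps add: zero_modes_cNeg_AAPhi
      zero_modes_cNeg_A2Phi zero_modes_cNeg_APhiPhiPsi)+

definition dminus_cocycle_summand :: "nat \<Rightarrow> vl_basis \<Rightarrow> nat \<Rightarrow> nat \<Rightarrow> complex" where
  "dminus_cocycle_summand N v k j =
     - cocycle_coeff N (k, j, AAPhi) * single_0 {#BA k 0, BA j 0#} {} v
   + (- cocycle_coeff N (k, j, BAPhi) * single_0 (add_mset (BB j 0) {#BA k 0#}) {} v
      - inv_Suc N * single_0 {#BA k 0#} {FPsi j 0, FPhi k 0} v
      - inv_Suc N * single_0 {#BA j 0, BA k 0#} {} v)
   + - cocycle_coeff N (k, j, A2Phi) * single_0 {#BA k 1#} {} v
   + (inv_Suc N * single_0 {#BA k 0, BB j 0#} {} v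
      + inv_Suc N * single_0 {#} {FPsi j 0, FPhi k 1} v
      + (if j = k then (1 - inv_Suc N) / 2 * single_0 {#BA k 1#} {} v else 0)
      - (1 - inv_Suc N) / 2 * single_0 {#BA k 0, BA j 0#} {} v)
   + (1 - inv_Suc N) / 2 * single_0 {#BA k 0, BA j 0#} {} v
   + (- cocycle_coeff N (k, j, PhiPhiPsi) * (if j < k then -1 else 1) *
        single_0 {#} {FPhi j 1, FPsi k 0} v
      + inv_Suc N * single_0 {#BA j 0#} {FPhi k 0, FPsi k 0} v)
   + - cocycle_coeff N (k, j, APhiPhiPsi) *
      ((if j < k then -1 else 1) * single_0 {#BA k 0#} {FPhi j 0, FPsi j 0} v
       + (if k < j then -1 else 1) * single_0 {#BA k 0#} {FPhi k 0, FPsi j 0} v)"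

lemma vl_dminus_cocycle_eq_sum:
  assumes "1 \<le> N"
  shows "vl_dminus N (cocycle N) v = (\<Sum>k<N. \<Sum>j<N. dminus_cocycle_summand N v k j)"
  unfolding vl_dminus_cocycle[OF assms] sum_cocycle_index dminus_cocycle_summand_def
  by (simp only: sum.distrib dminus_contributions_local dminus_contribution_BAPhi
      dminus_contribution_BPhi dminus_contribution_APhi dminus_contribution_PhiPhiPsi)

definition dminus_transposed_part :: "nat \<Rightarrow> vl_basis \<Rightarrow> nat \<Rightarrow> nat \<Rightarrow> complex" where
  "dminus_transposed_part N v k j =
     - cocycle_coeff N (k, j, PhiPhiPsi) * (if j < k then -1 else 1) *
       single_0 {#} {FPhi j 1, FPsi k 0} v
   - cocycle_coeff N (k, j, APhiPhiPsi) * (if j < k then -1 else 1) *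
       single_0 {#BA k 0#} {FPhi j 0, FPsi j 0} v"

lemma dminus_cocycle_summand_transpose:
  "dminus_cocycle_summand N v k j - dminus_transposed_part N v k j
     + dminus_transposed_part N v j k =
    (if j = k then single_0 {#BB k 0, BA k 0#} {} v + single_0 {#} {FPhi k 1, FPsi k 0} v else 0)"
  unfolding dminus_cocycle_summand_def dminus_transposed_part_def
  by (cases j k rule: linorder_cases) (simp_all add: insert_commute add_mset_commute algebra_simps)

lemma vl_dminus_cocycle_eq_vir:
  assumes "1 \<le> N"
  shows "vl_dminus N (cocycle N) = vl_vir N"
proof
  fix v
  have "vl_dminus N (cocycle N) v = (\<Sum>k<N. \<Sum>j<N. dminus_cocycle_summand N v k j
      - dminus_transposed_part N v k j + dminus_transposed_part N v j k)"
    unfolding vl_dminus_cocycle_eq_sum[OF assms] by (rule sum_sum_add_transpose)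
  then show "vl_dminus N (cocycle N) v = vl_vir N v"
    by (simp add: dminus_cocycle_summand_transpose vl_vir_def)
qed

lemma cocycle_in_VLgr: "cocycle N \<in> VLgr N (int N)"
proof -
  have supp: "{x. cocycle N x \<noteq> 0} \<subseteq> cocycle_basis N ` cocycle_index N"
    by (auto simp: cocycle_def vl_single_def elim: sum.not_neutral_contains_not_neutral
        split: if_splits)
  have "vl_valid N (cocycle_basis N t)" if "t \<in> cocycle_index N" for t
    using that by (induct N t rule: cocycle_basis.induct)
      (auto simp: cocycle_index_def vl_valid_def vl_cSum_def)
  then have support: "vl_valid N x \<and> fst (fst x) = vl_cSum N" if "cocycle N x \<noteq> 0" for x
    using that supp fst_cocycle_basis by blast
  show ?thesis
    using finite_subset[OF supp] finite_cocycle_index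
    by (auto simp: VLgr_def VL_def vl_ht_cSum dest!: support)
qed

theorem lemma2p6:
  fixes N :: nat
  assumes "N \<ge> 1"
  shows "\<exists>y\<in>VLgr N (int N). vl_dplus N y = (\<lambda>_. 0) \<and>
           (\<exists>w\<in>VLgr N (-1). (\<lambda>x. vl_dminus N y x - vl_vir N x) = vl_dplus N w)"
proof (intro bexI conjI)
  show "cocycle N \<in> VLgr N (int N)" by (rule cocycle_in_VLgr)
  show "vl_dplus N (cocycle N) = (\<lambda>_. 0)" using assms by (rule vl_dplus_cocycle_eq_0)
  show "(\<lambda>_. 0) \<in> VLgr N (-1)" by (simp add: VLgr_def VL_def)
  show "(\<lambda>x. vl_dminus N (cocycle N) x - vl_vir N x) = vl_dplus N (\<lambda>_. 0)"
    using assms by (simp add: vl_dminus_cocycle_eq_vir vl_dplus_def vl_Dq_def vl_lin_def)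
qed

end
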